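(* Let $\kappa\in\mathbb{C}\setminus\{0\}$, and let $(\tau_m)_{m\in\mathbb{Z}}$, $(\theta_m)_{m\in\mathbb{Z}}$ be nonzero complex numbers. Put $$u_m=\frac{\tau_m}{\tau_{m+1}},\qquad w_m=\frac{\theta_{m+1}}{\theta_m}\qquad(m\in\mathbb{Z}).$$ Define the $\mathbb{Z}\times\mathbb{Z}$ matrices $\mathcal{L}$ and $\overline{\mathcal{L}}$ by $$\mathcal{L}_{m,k}=\delta_{m+1,k}+\sum_{j=0}^\infty b_{-j}(m)\,\delta_{m-j,k},\qquad \overline{\mathcal{L}}_{m,k}=c_{-1}(m)\,\delta_{m-1,k}+\sum_{j=0}^\infty c_j(m)\,\delta_{m+j,k},$$ where for $j\ge 0$ $$b_{-j}(m)=(-1)^{j+1}\prod_{i=1}^{j}u_{m-i}\prod_{i=0}^{j}w_{m-i}\,\bigl(\kappa u_{m-j}+u_{m-j-1}\bigr),$$ $$c_j(m)=\kappa^{-j-1}\prod_{i=0}^{j-1}u_{m+i}^{-1}\prod_{i=0}^{j}w_{m+i}^{-1}\,\bigl(\kappa u_{m+j}^{-1}+u_{m+j+1}^{-1}\bigr),\qquad c_{-1}(m)=\frac{u_{m-1}}{u_m}.$$ Then $$\mathcal{L}=\frac{\Theta}{T}\Bigl[\,W\,\frac{1}{1+\Lambda^{-1}}\,U\,(\Lambda-\kappa)\Bigr]\frac{T}{\Theta},\qquad \overline{\mathcal{L}}=\frac{\Theta}{T}\Bigl[\,\frac{1}{1-\kappa^{-1}\Lambda}\,U^{-1}\,(1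+\Lambda^{-1})\,W^{-1}\Bigr]\frac{T}{\Theta}.$$
   Context: $\Lambda$ is the $\mathbb{Z}\times\mathbb{Z}$ shift matrix, $\Lambda_{m,k}=\delta_{m+1,k}$, and $\Lambda^{-1}$ its inverse ($\Lambda^{-1}_{m,k}=\delta_{m-1,k}$); $1$ denotes the identity matrix. $U^{\pm1}=\mathrm{diag}[u_m^{\pm1}]$, $W^{\pm1}=\mathrm{diag}[w_m^{\pm1}]$ are diagonal matrices, $\frac{\Theta}{T}$ denotes the diagonal matrix $\mathrm{diag}[\theta_m/\tau_m]$ and $\frac{T}{\Theta}$ its inverse $\mathrm{diag}[\tau_m/\theta_m]$. The expressions $\frac{1}{1+\Lambda^{-1}}$ and $\frac{1}{1-\kappa^{-1}\Lambda}$ are understood as the series $\sum_{j\ge0}(-1)^j\Lambda^{-j}$ and $\sum_{j\ge0}\kappa^{-j}\Lambda^{j}$ respectively; all matrix products involved have finitely many nonzero terms in each entry. *)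

theory Defs
  imports "HOL-Analysis.Analysis"
begin

text \<open>Z x Z matrices are functions int => int => complex (row index first).\<close>

type_synonym zmat = "int \<Rightarrow> int \<Rightarrow> complex"

definition mmult :: "zmat \<Rightarrow> zmat \<Rightarrow> zmat" where
  "mmult A B = (\<lambda>m k. \<Sum>\<^sub>\<infinity>j\<in>(UNIV::int set). A m j * B j k)"

definition madd :: "zmat \<Rightarrow> zmat \<Rightarrow> zmat" where
  "madd A B = (\<lambda>m k. A m k + B m k)"

definition mscale :: "complex \<Rightarrow> zmat \<Rightarrow> zmat" where
  "mscale c A = (\<lambda>m k. c * A m k)"

definition idm :: zmat where
  "idm = (\<lambda>m k. if k = m then 1 else 0)"

definition shiftm :: zmat where
  "shiftm = (\<lambda>m k. if k = m + 1 then 1 else 0)"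

definition shiftinv :: zmat where
  "shiftinv = (\<lambda>m k. if k = m - 1 then 1 else 0)"

definition diagm :: "(int \<Rightarrow> complex) \<Rightarrow> zmat" where
  "diagm d = (\<lambda>m k. if k = m then d m else 0)"

text \<open>1/(1+Lambda^{-1}) = sum_{j>=0} (-1)^j Lambda^{-j}, entrywise.\<close>
definition inv_one_plus_shiftinv :: zmat where
  "inv_one_plus_shiftinv = (\<lambda>m k. \<Sum>\<^sub>\<infinity>j\<in>(UNIV::nat set).
      (-1)^j * (if k = m - int j then 1 else 0))"

text \<open>1/(1-kappa^{-1} Lambda) = sum_{j>=0} kappa^{-j} Lambda^{j}, entrywise.\<close>
definition inv_one_minus_kshift :: "complex \<Rightarrow> zmat" where
  "inv_one_minus_kshift \<kappa> = (\<lambda>m k. \<Sum>\<^sub>\<infinity>j\<in>(UNIV::nat set).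
      inverse \<kappa> ^ j * (if k = m + int j then 1 else 0))"

definition useq :: "(int \<Rightarrow> complex) \<Rightarrow> int \<Rightarrow> complex" where
  "useq \<tau> m = \<tau> m / \<tau> (m + 1)"

definition wseq :: "(int \<Rightarrow> complex) \<Rightarrow> int \<Rightarrow> complex" where
  "wseq \<theta> m = \<theta> (m + 1) / \<theta> m"

text \<open>b_{-j}(m), for j >= 0.\<close>
definition bcoef :: "complex \<Rightarrow> (int \<Rightarrow> complex) \<Rightarrow> (int \<Rightarrow> complex) \<Rightarrow> nat \<Rightarrow> int \<Rightarrow> complex" where
  "bcoef \<kappa> u w j m = (-1)^(j+1) * (\<Prod>i\<in>{1..j}. u (m - int i)) * (\<Prod>i\<in>{0..j}. w (m - int i))
      * (\<kappa> * u (m - int j) + u (m - int j - 1))"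

definition ccoef :: "complex \<Rightarrow> (int \<Rightarrow> complex) \<Rightarrow> (int \<Rightarrow> complex) \<Rightarrow> nat \<Rightarrow> int \<Rightarrow> complex" where
  "ccoef \<kappa> u w j m = inverse \<kappa> ^ (j+1) * (\<Prod>i\<in>{0..<j}. inverse (u (m + int i)))
      * (\<Prod>i\<in>{0..j}. inverse (w (m + int i)))
      * (\<kappa> * inverse (u (m + int j)) + inverse (u (m + int j + 1)))"

definition cminus1 :: "(int \<Rightarrow> complex) \<Rightarrow> int \<Rightarrow> complex" where
  "cminus1 u m = u (m - 1) / u m"

definition Lmat :: "complex \<Rightarrow> (int \<Rightarrow> complex) \<Rightarrow> (int \<Rightarrow> complex) \<Rightarrow> zmat" where
  "Lmat \<kappa> u w = (\<lambda>m k. (if k = m + 1 then 1 else 0) +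
      (\<Sum>\<^sub>\<infinity>j\<in>(UNIV::nat set). bcoef \<kappa> u w j m * (if k = m - int j then 1 else 0)))"

definition Lbarmat :: "complex \<Rightarrow> (int \<Rightarrow> complex) \<Rightarrow> (int \<Rightarrow> complex) \<Rightarrow> zmat" where
  "Lbarmat \<kappa> u w = (\<lambda>m k. cminus1 u m * (if k = m - 1 then 1 else 0) +
      (\<Sum>\<^sub>\<infinity>j\<in>(UNIV::nat set). ccoef \<kappa> u w j m * (if k = m + int j then 1 else 0)))"

end

theory Submission
  imports Defs
begin

text \<open>Every series occurring on either side has at most one nonzero term per entry, so
the identities are checked entrywise on finite expressions. The products of \<open>u\<close>'s and
\<open>w\<close>'s in \<open>b_{-j}(m)\<close> and \<open>c_j(m)\<close> telescope to quotients of \<open>\<tau>\<close>'s and \<open>\<theta>\<close>'s, which are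
exactly the factors produced by the conjugation with \<open>\<Theta>/T\<close>; the remaining factor
\<open>\<kappa> u_{m-j} + u_{m-j-1}\<close> (resp. \<open>\<kappa> u_{m+j}^{-1} + u_{m+j+1}^{-1}\<close>) is the two-term entry of
\<open>U (\<Lambda> - \<kappa>)\<close> (resp. \<open>U^{-1} (1 + \<Lambda>^{-1})\<close>) weighted by the geometric series.\<close>

lemma infsum_eq_sum_finite_support:
  fixes f :: "'a \<Rightarrow> 'b::{comm_monoid_add, t2_space}"
  assumes "finite F" and "\<And>j. j \<notin> F \<Longrightarrow> f j = 0"
  shows "infsum f UNIV = sum f F"
proof -
  have "infsum f UNIV = infsum f F"
    by (rule infsum_cong_neutral) (use assms in auto)
  then show ?thesis
    using assms(1) by simp
qed

lemma mmult_diagm_left: "mmult (diagm d) A m k = d m * A m k"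
  unfolding mmult_def diagm_def by (subst infsum_eq_sum_finite_support[where F = "{m}"]) auto

lemma mmult_diagm_right: "mmult A (diagm d) m k = A m k * d k"
  unfolding mmult_def diagm_def by (subst infsum_eq_sum_finite_support[where F = "{k}"]) auto

lemma inv_one_plus_shiftinv_eq:
  "inv_one_plus_shiftinv m k = (if k \<le> m then (-1) ^ nat (m - k) else 0)"
  unfolding inv_one_plus_shiftinv_def
  by (subst infsum_eq_sum_finite_support[where F = "{nat (m - k)}"]) auto

lemma inv_one_minus_kshift_eq:
  "inv_one_minus_kshift \<kappa> m k = (if m \<le> k then inverse \<kappa> ^ nat (k - m) else 0)"
  unfolding inv_one_minus_kshift_def
  by (subst infsum_eq_sum_finite_support[where F = "{nat (k - m)}"]) auto

lemma Lmat_eq: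
  "Lmat \<kappa> u w m k =
     (if k = m + 1 then 1 else 0) + (if k \<le> m then bcoef \<kappa> u w (nat (m - k)) m else 0)"
  unfolding Lmat_def by (subst infsum_eq_sum_finite_support[where F = "{nat (m - k)}"]) auto

lemma Lbarmat_eq:
  "Lbarmat \<kappa> u w m k =
     (if k = m - 1 then cminus1 u m else 0) + (if m \<le> k then ccoef \<kappa> u w (nat (k - m)) m else 0)"
  unfolding Lbarmat_def by (subst infsum_eq_sum_finite_support[where F = "{nat (k - m)}"]) auto

lemma mmult_inv_one_plus_shiftinv_diagm_shift_eq:
  "mmult inv_one_plus_shiftinv (mmult (diagm u) (madd shiftm (mscale (- \<kappa>) idm))) m k =
     inv_one_plus_shiftinv m (k - 1) * u (k - 1) - \<kappa> * inv_one_plus_shiftinv m k * u k"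
  unfolding mmult_def[of inv_one_plus_shiftinv] mmult_diagm_left
  by (subst infsum_eq_sum_finite_support[where F = "{k - 1, k}"])
    (auto simp: madd_def shiftm_def mscale_def idm_def)

lemma mmult_inv_one_minus_kshift_diagm_shiftinv_eq:
  "mmult (inv_one_minus_kshift \<kappa>) (mmult (diagm v) (mmult (madd idm shiftinv) (diagm x))) m k =
     (inv_one_minus_kshift \<kappa> m k * v k + inv_one_minus_kshift \<kappa> m (k + 1) * v (k + 1)) * x k"
  unfolding mmult_def[of "inv_one_minus_kshift \<kappa>"] mmult_diagm_left mmult_diagm_right
  by (subst infsum_eq_sum_finite_support[where F = "{k, k + 1}"])
    (auto simp: madd_def shiftinv_def idm_def algebra_simps)

lemma prod_useq_below:
  assumes "\<And>m. \<tau> m \<noteq> 0"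
  shows "(\<Prod>i\<in>{1..j}. useq \<tau> (m - int i)) = \<tau> (m - int j) / \<tau> m"
proof -
  have "(\<Prod>i\<in>{1..j}. useq \<tau> (m - int i)) =
      (\<Prod>i = Suc 0..j. \<tau> (m - int i) / \<tau> (m - int (i - 1)))"
    by (intro prod.cong) (auto simp: useq_def of_nat_diff algebra_simps)
  also have "\<dots> = \<tau> (m - int j) / \<tau> (m - int 0)"
    using assms by (intro prod_telescope'') auto
  finally show ?thesis by simp
qed

lemma prod_wseq_below:
  assumes "\<And>m. \<theta> m \<noteq> 0"
  shows "(\<Prod>i\<in>{0..j}. wseq \<theta> (m - int i)) = \<theta> (m + 1) / \<theta> (m - int j)"
proof -
  have "(\<Prod>i\<in>{0..j}. wseq \<theta> (m - int i)) =
      (\<Prod>i\<le>j. \<theta> (m + 1 - int i) / \<theta> (m + 1 - int (Suc i)))"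
    by (intro prod.cong) (auto simp: wseq_def algebra_simps)
  also have "\<dots> = \<theta> (m + 1 - int 0) / \<theta> (m + 1 - int (Suc j))"
    using assms by (intro prod_telescope) auto
  finally show ?thesis by simp
qed

lemma prod_inverse_useq_above:
  assumes "\<And>m. \<tau> m \<noteq> 0"
  shows "(\<Prod>i\<in>{0..<j}. inverse (useq \<tau> (m + int i))) = \<tau> (m + int j) / \<tau> m"
proof -
  have "(\<Prod>i\<in>{0..<j}. inverse (useq \<tau> (m + int i))) =
      (\<Prod>i<j. \<tau> (m + int (Suc i)) / \<tau> (m + int i))"
    by (intro prod.cong) (auto simp: useq_def algebra_simps)
  also have "\<dots> = \<tau> (m + int j) / \<tau> (m + int 0)"
    using assms by (intro prod_lessThan_telescope) auto
  finally show ?thesis by simp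
qed

lemma prod_inverse_wseq_above:
  assumes "\<And>m. \<theta> m \<noteq> 0"
  shows "(\<Prod>i\<in>{0..j}. inverse (wseq \<theta> (m + int i))) = \<theta> m / \<theta> (m + int j + 1)"
proof -
  have "(\<Prod>i\<in>{0..j}. inverse (wseq \<theta> (m + int i))) =
      (\<Prod>i\<le>j. \<theta> (m + int i) / \<theta> (m + int (Suc i)))"
    by (intro prod.cong) (auto simp: wseq_def algebra_simps)
  also have "\<dots> = \<theta> (m + int 0) / \<theta> (m + int (Suc j))"
    using assms by (intro prod_telescope) auto
  finally show ?thesis by (simp add: algebra_simps)
qed

lemma bcoef_useq_wseq:
  assumes "\<And>m. \<tau> m \<noteq> 0" and "\<And>m. \<theta> m \<noteq> 0"
  shows "bcoef \<kappa> (useq \<tau>) (wseq \<theta>) j m =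
    (-1) ^ (j + 1) * (\<tau> (m - int j) / \<tau> m) * (\<theta> (m + 1) / \<theta> (m - int j))
      * (\<kappa> * useq \<tau> (m - int j) + useq \<tau> (m - int j - 1))"
  unfolding bcoef_def prod_useq_below[OF assms(1)] prod_wseq_below[OF assms(2)] ..

lemma ccoef_useq_wseq:
  assumes "\<And>m. \<tau> m \<noteq> 0" and "\<And>m. \<theta> m \<noteq> 0"
  shows "ccoef \<kappa> (useq \<tau>) (wseq \<theta>) j m =
    inverse \<kappa> ^ (j + 1) * (\<tau> (m + int j) / \<tau> m) * (\<theta> m / \<theta> (m + int j + 1))
      * (\<kappa> * inverse (useq \<tau> (m + int j)) + inverse (useq \<tau> (m + int j + 1)))"
  unfolding ccoef_def prod_inverse_useq_above[OF assms(1)] prod_inverse_wseq_above[OF assms(2)] ..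

lemma Lmat_factorization:
  assumes "\<And>m. \<tau> m \<noteq> 0" and "\<And>m. \<theta> m \<noteq> 0"
  shows "Lmat \<kappa> (useq \<tau>) (wseq \<theta>) =
    mmult (diagm (\<lambda>m. \<theta> m / \<tau> m))
      (mmult (mmult (diagm (wseq \<theta>)) (mmult inv_one_plus_shiftinv
               (mmult (diagm (useq \<tau>)) (madd shiftm (mscale (- \<kappa>) idm)))))
        (diagm (\<lambda>m. \<tau> m / \<theta> m)))"
    (is "_ = ?R")
proof (intro ext)
  fix m k :: int
  have R: "?R m k = \<theta> m / \<tau> m * wseq \<theta> m
      * (inv_one_plus_shiftinv m (k - 1) * useq \<tau> (k - 1)
         - \<kappa> * inv_one_plus_shiftinv m k * useq \<tau> k) * (\<tau> k / \<theta> k)" for k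
    by (simp add: mmult_diagm_left mmult_diagm_right mmult_inv_one_plus_shiftinv_diagm_shift_eq)
  consider (diagonal) "k = m + 1" | (below) j where "k = m - int j" | (above) "k > m + 1"
  proof (cases "k \<le> m")
    case True
    then have "k = m - int (nat (m - k))" by simp
    then show thesis by (rule that(2))
  qed (use that in linarith)
  then show "Lmat \<kappa> (useq \<tau>) (wseq \<theta>) m k = ?R m k"
  proof cases
    case diagonal
    then show ?thesis
      using assms by (simp add: R Lmat_eq inv_one_plus_shiftinv_eq useq_def wseq_def)
  next
    case (below j)
    then have "nat (m - k) = j" and "nat (m - (k - 1)) = Suc j"
      by auto
    then show ?thesis
      using assms
      by (simp add: below R Lmat_eq inv_one_plus_shiftinv_eq bcoef_useq_wseq)
        (simp add: wseq_def field_simps)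
  next
    case above
    then show ?thesis
      by (simp add: R Lmat_eq inv_one_plus_shiftinv_eq)
  qed
qed

lemma Lbarmat_factorization:
  assumes "\<kappa> \<noteq> 0" and "\<And>m. \<tau> m \<noteq> 0" and "\<And>m. \<theta> m \<noteq> 0"
  shows "Lbarmat \<kappa> (useq \<tau>) (wseq \<theta>) =
    mmult (diagm (\<lambda>m. \<theta> m / \<tau> m))
      (mmult (mmult (inv_one_minus_kshift \<kappa>) (mmult (diagm (\<lambda>m. inverse (useq \<tau> m)))
               (mmult (madd idm shiftinv) (diagm (\<lambda>m. inverse (wseq \<theta> m))))))
        (diagm (\<lambda>m. \<tau> m / \<theta> m)))"
    (is "_ = ?R")
proof (intro ext)
  fix m k :: int
  have R: "?R m k = \<theta> m / \<tau> m * (inv_one_minus_kshift \<kappa> m k * inverse (useq \<tau> k)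
      + inv_one_minus_kshift \<kappa> m (k + 1) * inverse (useq \<tau> (k + 1)))
      * inverse (wseq \<theta> k) * (\<tau> k / \<theta> k)" for k
    by (simp add: mmult_diagm_left mmult_diagm_right mmult_inv_one_minus_kshift_diagm_shiftinv_eq)
  consider (subdiagonal) "k = m - 1" | (above) j where "k = m + int j" | (below) "k < m - 1"
  proof (cases "m \<le> k")
    case True
    then have "k = m + int (nat (k - m))" by simp
    then show thesis by (rule that(2))
  qed (use that in linarith)
  then show "Lbarmat \<kappa> (useq \<tau>) (wseq \<theta>) m k = ?R m k"
  proof cases
    case subdiagonal
    then show ?thesis
      using assms
      by (simp add: R Lbarmat_eq inv_one_minus_kshift_eq cminus1_def)
        (simp add: useq_def wseq_def field_simps)
  next
    case (above j)
    then have "nat (k - m) = j" and "nat (k + 1 - m) = Suc j"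
      by auto
    then show ?thesis
      using assms
      by (simp add: above R Lbarmat_eq inv_one_minus_kshift_eq ccoef_useq_wseq)
        (simp add: useq_def wseq_def field_simps)
  next
    case below
    then show ?thesis
      by (simp add: R Lbarmat_eq inv_one_minus_kshift_eq)
  qed
qed

theorem proposition2p1:
  fixes \<kappa> :: complex and \<tau> \<theta> :: "int \<Rightarrow> complex"
  assumes "\<kappa> \<noteq> 0"
    and "\<And>m. \<tau> m \<noteq> 0"
    and "\<And>m. \<theta> m \<noteq> 0"
  defines "u \<equiv> useq \<tau>" and "w \<equiv> wseq \<theta>"
  shows "Lmat \<kappa> u w =
      mmult (diagm (\<lambda>m. \<theta> m / \<tau> m))
        (mmult (mmult (diagm w) (mmult inv_one_plus_shiftinv
                 (mmult (diagm u) (madd shiftm (mscale (- \<kappa>) idm)))))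
          (diagm (\<lambda>m. \<tau> m / \<theta> m))) \<and>
    Lbarmat \<kappa> u w =
      mmult (diagm (\<lambda>m. \<theta> m / \<tau> m))
        (mmult (mmult (inv_one_minus_kshift \<kappa>) (mmult (diagm (\<lambda>m. inverse (u m)))
                 (mmult (madd idm shiftinv) (diagm (\<lambda>m. inverse (w m))))))
          (diagm (\<lambda>m. \<tau> m / \<theta> m)))"
  unfolding u_def w_def
  using assms by (intro conjI Lmat_factorization Lbarmat_factorization)

end
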